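(* Let $T\in B(H)$ satisfy $(T-t_N)^{k_N}(T-t_{N-1})^{k_{N-1}}\cdots(T-t_1)^{k_1}=0$, where $t_1,\ldots,t_N\in\mathbb C$ are pairwise distinct and $k_1,\ldots,k_N$ are positive integers. For $0\le m\le N$ let $R_m=\ker\big((T-t_m)^{k_m}\cdots(T-t_1)^{k_1}\big)$ (with $R_0=\{0\}$, so $R_N=H$), and for $1\le m\le N$ let $L_m=R_m\ominus R_{m-1}$. Then for every $m$, the orthogonal projection onto $L_m$ belongs to $C^*(T,1)$, the unital $C^*$-algebra generated by $T$. *)

theory Defs
  imports "HOL-Analysis.Analysis"
begin

class complex_inner = real_normed_vector +
  fixes scaleC :: "complex \<Rightarrow> 'a \<Rightarrow> 'a"
    and cinner :: "'a \<Rightarrow> 'a \<Rightarrow> complex"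
  assumes scaleC_add_right: "scaleC a (x + y) = scaleC a x + scaleC a y"
    and scaleC_add_left: "scaleC (a + b) x = scaleC a x + scaleC b x"
    and scaleC_scaleC: "scaleC a (scaleC b x) = scaleC (a * b) x"
    and scaleC_one: "scaleC 1 x = x"
    and scaleR_scaleC: "scaleR r x = scaleC (complex_of_real r) x"
    and cinner_commute: "cinner x y = cnj (cinner y x)"
    and cinner_add_left: "cinner (x + y) z = cinner x z + cinner y z"
    and cinner_scaleC_left: "cinner (scaleC c x) y = cnj c * cinner x y"
    and cinner_self_norm: "cinner x x = complex_of_real ((norm x)\<^sup>2)"

class chilbert = complex_inner + complete_space

definition bounded_clinear :: "('a::complex_inner \<Rightarrow> 'a) \<Rightarrow> bool" where
  "bounded_clinear f \<longleftrightarrow>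
     (\<forall>x y. f (x + y) = f x + f y) \<and>
     (\<forall>c x. f (scaleC c x) = scaleC c (f x)) \<and>
     (\<exists>K. \<forall>x. norm (f x) \<le> norm x * K)"

definition cadjoint :: "('a::complex_inner \<Rightarrow> 'a) \<Rightarrow> ('a \<Rightarrow> 'a)" where
  "cadjoint A = (SOME B. \<forall>x y. cinner (A x) y = cinner x (B y))"

inductive_set star_poly_alg :: "('a::complex_inner \<Rightarrow> 'a) \<Rightarrow> ('a \<Rightarrow> 'a) set"
  for T :: "'a \<Rightarrow> 'a" where
  gen: "T \<in> star_poly_alg T"
| unit: "(\<lambda>x. x) \<in> star_poly_alg T"
| adj: "A \<in> star_poly_alg T \<Longrightarrow> cadjoint A \<in> star_poly_alg T"
| add: "A \<in> star_poly_alg T \<Longrightarrow> B \<in> star_poly_alg T \<Longrightarrow> (\<lambda>x. A x + B x) \<in> star_poly_alg T"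
| smult: "A \<in> star_poly_alg T \<Longrightarrow> (\<lambda>x. scaleC c (A x)) \<in> star_poly_alg T"
| comp: "A \<in> star_poly_alg T \<Longrightarrow> B \<in> star_poly_alg T \<Longrightarrow> A \<circ> B \<in> star_poly_alg T"

text \<open>C*(T,1): operator-norm closure of the unital *-algebra generated by T.\<close>
definition cstar_gen :: "('a::complex_inner \<Rightarrow> 'a) \<Rightarrow> ('a \<Rightarrow> 'a) set" where
  "cstar_gen T = {A. bounded_clinear A \<and>
     (\<forall>e>0. \<exists>P\<in>star_poly_alg T. onorm (\<lambda>x. A x - P x) < e)}"

definition is_orth_proj :: "('a::complex_inner \<Rightarrow> 'a) \<Rightarrow> 'a set \<Rightarrow> bool" where
  "is_orth_proj P M \<longleftrightarrow> (\<forall>x. P x \<in> M \<and> (\<forall>y\<in>M. cinner y (x - P x) = 0))"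

definition ker :: "('a::complex_inner \<Rightarrow> 'a) \<Rightarrow> 'a set" where
  "ker A = {x. A x = 0}"

definition orth_in :: "'a::complex_inner set \<Rightarrow> 'a set \<Rightarrow> 'a set" where
  "orth_in R S = {x \<in> R. \<forall>y\<in>S. cinner y x = 0}"

fun opprod :: "('a::complex_inner \<Rightarrow> 'a) \<Rightarrow> (nat \<Rightarrow> complex) \<Rightarrow> (nat \<Rightarrow> nat) \<Rightarrow> nat \<Rightarrow> ('a \<Rightarrow> 'a)" where
  "opprod T t k 0 = (\<lambda>x. x)"
| "opprod T t k (Suc m) = ((\<lambda>x. T x - scaleC (t (Suc m)) x) ^^ k (Suc m)) \<circ> opprod T t k m"

end

theory Submission
  imports Defs
    "HOL-Computational_Algebra.Polynomial_Factorial"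
    "HOL-Computational_Algebra.Field_as_Ring"
begin

(*
  Write l_i = (X - t_i)^(k_i) and R_m = ker p_m(T) with p_m = l_1 \<cdots> l_m.  Since the
  t_i are distinct, p_m is coprime to q_m = l_(m+1) \<cdots> l_N, and p_m q_m annihilates T.
  A Bezout identity a p_m + b q_m = 1 turns E = (a p_m)(T) into an idempotent
  polynomial in T with ker E = R_m.  The orthogonal projection onto the kernel of any
  bounded idempotent E is the norm limit of the powers of the self-adjoint operator
  B = 1 - E*E / K^2 (with K \<ge> max 1 |E|): B fixes ker E pointwise and contracts its
  orthogonal complement by a uniform factor < 1, because |x| \<le> |Ex| there.  Hence the
  projection onto R_m lies in C*(T,1), and the projection onto L_m is the difference
  of the projections onto the nested subspaces R_m and R_(m-1).
*)

subclass (in chilbert) banach ..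

lemma scaleC_zero_left [simp]: "scaleC 0 x = (0::'a::complex_inner)"
proof -
  have "scaleC 0 x = scaleC 0 x + scaleC 0 (x::'a)" using scaleC_add_left[of 0 0 x] by simp
  then show ?thesis by simp
qed

lemma scaleC_zero_right [simp]: "scaleC a 0 = (0::'a::complex_inner)"
proof -
  have "scaleC a 0 = scaleC a 0 + scaleC a (0::'a)" using scaleC_add_right[of a 0 0] by simp
  then show ?thesis by simp
qed

lemma scaleC_minus_left: "scaleC (-a) x = - scaleC a (x::'a::complex_inner)"
proof -
  have "scaleC a x + scaleC (-a) x = 0" using scaleC_add_left[of a "-a" x] by simp
  then show ?thesis by (simp add: eq_neg_iff_add_eq_0 add.commute)
qed

lemma scaleC_neg1 [simp]: "scaleC (-1) x = - (x::'a::complex_inner)"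
  using scaleC_minus_left[of 1 x] by (simp add: scaleC_one)

lemma scaleC_eq_0_iff [simp]: "scaleC c x = 0 \<longleftrightarrow> c = 0 \<or> x = (0::'a::complex_inner)"
proof (cases "c = 0")
  case False
  have "scaleC (1 / c) (scaleC c x) = x" using False by (simp add: scaleC_scaleC scaleC_one)
  then show ?thesis using False by auto
qed simp

lemma cinner_add_right: "cinner x (y + z) = cinner x y + cinner x (z::'a::complex_inner)"
  by (metis cinner_add_left cinner_commute complex_cnj_add)

lemma cinner_scaleC_right: "cinner x (scaleC c y) = c * cinner x (y::'a::complex_inner)"
  by (metis cinner_commute cinner_scaleC_left complex_cnj_cnj complex_cnj_mult)

lemma cinner_zero_left [simp]: "cinner 0 x = (0::complex)"
  using cinner_scaleC_left[of 0 "0::'a::complex_inner" x] by simp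

lemma cinner_zero_right [simp]: "cinner x 0 = (0::complex)"
  using cinner_scaleC_right[of x 0 "0::'a::complex_inner"] by simp

lemma cinner_minus_right: "cinner x (-y) = - cinner x (y::'a::complex_inner)"
  using cinner_scaleC_right[of x "-1" y] by simp

lemma cinner_diff_right: "cinner x (y - z) = cinner x y - cinner x (z::'a::complex_inner)"
  using cinner_add_right[of x y "-z"] cinner_minus_right[of x z] by simp

lemma cinner_orth_sym: "cinner x y = 0 \<longleftrightarrow> cinner y (x::'a::complex_inner) = 0"
  by (metis cinner_commute complex_cnj_zero)

lemma norm_sq_cinner: "(norm x)^2 = Re (cinner x (x::'a::complex_inner))"
  by (simp add: cinner_self_norm)

lemma norm_add_sq:
  "(norm (x + y))^2 = (norm x)^2 + 2 * Re (cinner x y) + (norm (y::'a::complex_inner))^2"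
proof -
  have "cinner (x+y) (x+y) = cinner x x + cinner x y + cnj (cinner x y) + cinner y y"
    by (simp add: cinner_add_left cinner_add_right) (metis cinner_commute)
  then show ?thesis by (simp add: norm_sq_cinner)
qed

lemma norm_diff_sq:
  "(norm (x - y))^2 = (norm x)^2 - 2 * Re (cinner x y) + (norm (y::'a::complex_inner))^2"
  using norm_add_sq[of x "-y"] by (simp add: cinner_minus_right)

lemma norm_scaleC: "norm (scaleC c x) = cmod c * norm (x::'a::complex_inner)"
proof -
  have 1: "(norm (scaleC c x))^2 = Re (cnj c * c * cinner x x)"
    by (metis norm_sq_cinner cinner_scaleC_left cinner_scaleC_right mult.assoc mult.commute)
  have 2: "cnj c * c * cinner x x = complex_of_real ((cmod c)^2 * (norm x)^2)"
    by (metis cinner_self_norm complex_norm_square mult.commute of_real_mult)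
  have "(norm (scaleC c x))^2 = (cmod c * norm x)^2" using 1 2 by (simp add: power_mult_distrib)
  then show ?thesis by (simp add: power2_eq_iff_nonneg)
qed

lemma parallelogram_midpoint:
  "(norm (x - y))^2 = 2 * (norm x)^2 + 2 * (norm y)^2 - 4 * (norm (scaleC (1/2) (x + y)))^2"
  for x y :: "'a::complex_inner"
proof -
  have "(norm (scaleC (1/2) (x + y)))^2 = (norm (x + y))^2 / 4"
    by (simp add: norm_scaleC power_mult_distrib power_divide)
  then show ?thesis by (simp add: norm_add_sq norm_diff_sq)
qed

lemma cauchy_schwarz: "cmod (cinner x y) \<le> norm x * norm (y::'a::complex_inner)"
proof (cases "x = 0")
  case True then show ?thesis by simp
next
  case False
  define c where "c = cinner x y / of_real ((norm x)^2)"
  have nx: "norm x > 0" using False by simp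
  have "0 \<le> (norm (y - scaleC c x))^2" by simp
  also have "\<dots> = (norm y)^2 - 2 * Re (cinner y (scaleC c x)) + (cmod c)^2 * (norm x)^2"
    by (simp add: norm_diff_sq norm_scaleC power_mult_distrib)
  also have "cinner y (scaleC c x) = c * cnj (cinner x y)"
    by (simp add: cinner_scaleC_right) (metis cinner_commute)
  also have "Re (c * cnj (cinner x y)) = (cmod (cinner x y))^2 / (norm x)^2"
    unfolding c_def by (simp add: complex_mult_cnj) (metis cmod_power2 power2_eq_square)
  also have "(cmod c)^2 * (norm x)^2 = (cmod (cinner x y))^2 / (norm x)^2"
    unfolding c_def using nx by (simp add: norm_divide power_divide power2_eq_square norm_mult)
  finally have "(cmod (cinner x y))^2 / (norm x)^2 \<le> (norm y)^2" by simp
  then have "(cmod (cinner x y))^2 \<le> (norm x * norm y)^2" using nx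
    by (simp add: divide_le_eq power_mult_distrib mult.commute)
  then show ?thesis by (rule power2_le_imp_le) simp
qed

lemma bounded_linear_cinner_right: "bounded_linear (\<lambda>z. cinner y (z::'a::complex_inner))"
proof (rule bounded_linear_intro[where K="norm y"])
  show "cinner y (a + b) = cinner y a + cinner y b" for a b by (rule cinner_add_right)
  show "cinner y (scaleR r a) = scaleR r (cinner y a)" for r a
    by (simp add: scaleR_scaleC cinner_scaleC_right scaleR_conv_of_real)
  show "norm (cinner y a) \<le> norm a * norm y" for a
    using cauchy_schwarz[of y a] by (simp add: mult.commute)
qed

lemma cinner_ext: "(\<And>x. cinner x u = cinner x v) \<Longrightarrow> u = (v::'a::complex_inner)"
proof -
  assume "\<And>x. cinner x u = cinner x v"
  then have "cinner (u - v) (u - v) = 0" by (simp add: cinner_diff_right)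
  then show "u = v" by (simp add: cinner_self_norm)
qed

lemma bclI:
  assumes "\<And>x y. f (x + y) = f x + f y" "\<And>c x. f (scaleC c x) = scaleC c (f x)"
    "\<And>x. norm (f x) \<le> norm x * K"
  shows "bounded_clinear (f::'a::complex_inner \<Rightarrow> 'a)"
  unfolding bounded_clinear_def using assms by blast

lemma bcl_add: "bounded_clinear f \<Longrightarrow> f (x + y) = f x + f y"
  unfolding bounded_clinear_def by blast

lemma bcl_scaleC: "bounded_clinear f \<Longrightarrow> f (scaleC c x) = scaleC c (f x)"
  unfolding bounded_clinear_def by blast

lemma bcl_bound: "bounded_clinear f \<Longrightarrow> \<exists>K\<ge>1. \<forall>x. norm (f x) \<le> norm x * K"
proof -
  assume "bounded_clinear f"
  then obtain K where K: "\<forall>x. norm (f x) \<le> norm x * K" unfolding bounded_clinear_def by blast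
  have "\<forall>x. norm (f x) \<le> norm x * max K 1"
    by (metis K max.cobounded1 mult_left_mono norm_ge_zero order_trans)
  then show ?thesis by (intro exI[of _ "max K 1"]) auto
qed

lemma bcl_zero [simp]: "bounded_clinear f \<Longrightarrow> f 0 = 0"
  using bcl_scaleC[of f 0 0] by simp

lemma bcl_diff: "bounded_clinear f \<Longrightarrow> f (x - y) = f x - f y"
  using bcl_add[of f x "-y"] bcl_scaleC[of f "-1" y] by simp

lemma bcl_linear: "bounded_clinear f \<Longrightarrow> bounded_linear f"
proof -
  assume f: "bounded_clinear f"
  then obtain K where K: "\<forall>x. norm (f x) \<le> norm x * K" unfolding bounded_clinear_def by blast
  show ?thesis
  proof (rule bounded_linear_intro[where K=K])
    show "f (x + y) = f x + f y" for x y using bcl_add[OF f] .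
    show "f (scaleR r x) = scaleR r (f x)" for r x
      using bcl_scaleC[OF f] by (simp add: scaleR_scaleC)
    show "norm (f x) \<le> norm x * K" for x using K by blast
  qed
qed

lemma bcl_id: "bounded_clinear (\<lambda>x::'a::complex_inner. x)"
  by (rule bclI[where K=1]) auto

lemma bcl_comp: "bounded_clinear f \<Longrightarrow> bounded_clinear g \<Longrightarrow> bounded_clinear (\<lambda>x. f (g x))"
proof -
  assume f: "bounded_clinear f" and g: "bounded_clinear g"
  obtain K where K: "K \<ge> 1" "\<forall>x. norm (f x) \<le> norm x * K" using bcl_bound[OF f] by blast
  obtain L where L: "L \<ge> 1" "\<forall>x. norm (g x) \<le> norm x * L" using bcl_bound[OF g] by blast
  show ?thesis
  proof (rule bclI[where K="L*K"])
    show "f (g (x + y)) = f (g x) + f (g y)" for x y by (simp add: bcl_add[OF f] bcl_add[OF g])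
    show "f (g (scaleC c x)) = scaleC c (f (g x))" for c x
      by (simp add: bcl_scaleC[OF f] bcl_scaleC[OF g])
    show "norm (f (g x)) \<le> norm x * (L * K)" for x
    proof -
      have "norm (f (g x)) \<le> norm (g x) * K" using K by blast
      also have "\<dots> \<le> norm x * L * K" using L K by (simp add: mult_right_mono)
      finally show ?thesis by (simp add: mult.assoc)
    qed
  qed
qed

lemma bcl_plus: "bounded_clinear f \<Longrightarrow> bounded_clinear g \<Longrightarrow> bounded_clinear (\<lambda>x. f x + g x)"
proof -
  assume f: "bounded_clinear f" and g: "bounded_clinear g"
  obtain K where K: "K \<ge> 1" "\<forall>x. norm (f x) \<le> norm x * K" using bcl_bound[OF f] by blast
  obtain L where L: "L \<ge> 1" "\<forall>x. norm (g x) \<le> norm x * L" using bcl_bound[OF g] by blast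
  show ?thesis
  proof (rule bclI[where K="K+L"])
    show "f (x + y) + g (x + y) = (f x + g x) + (f y + g y)" for x y
      by (simp add: bcl_add[OF f] bcl_add[OF g] algebra_simps)
    show "f (scaleC c x) + g (scaleC c x) = scaleC c (f x + g x)" for c x
      by (simp add: bcl_scaleC[OF f] bcl_scaleC[OF g] scaleC_add_right)
    show "norm (f x + g x) \<le> norm x * (K + L)" for x
      using norm_triangle_ineq[of "f x" "g x"] K L by (smt (verit) distrib_left)
  qed
qed

lemma bcl_smult: "bounded_clinear f \<Longrightarrow> bounded_clinear (\<lambda>x. scaleC c (f x))"
proof -
  assume f: "bounded_clinear f"
  obtain K where K: "K \<ge> 1" "\<forall>x. norm (f x) \<le> norm x * K" using bcl_bound[OF f] by blast
  show ?thesis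
  proof (rule bclI[where K="cmod c * K"])
    show "scaleC c (f (x + y)) = scaleC c (f x) + scaleC c (f y)" for x y
      by (simp add: bcl_add[OF f] scaleC_add_right)
    show "scaleC c (f (scaleC d x)) = scaleC d (scaleC c (f x))" for d x
      by (simp add: bcl_scaleC[OF f] scaleC_scaleC mult.commute)
    show "norm (scaleC c (f x)) \<le> norm x * (cmod c * K)" for x
      using K by (simp add: norm_scaleC) (metis mult.left_commute mult_left_mono norm_ge_zero)
  qed
qed

lemma bcl_minus_fun: "bounded_clinear f \<Longrightarrow> bounded_clinear g \<Longrightarrow> bounded_clinear (\<lambda>x. f x - g x)"
  using bcl_plus[OF _ bcl_smult[of g "-1"]] by simp

lemma bcl_funpow: "bounded_clinear f \<Longrightarrow> bounded_clinear (f ^^ n)"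
proof (induction n)
  case 0 then show ?case using bcl_id by (simp add: id_def)
next
  case (Suc n) then show ?case using bcl_comp[of f "f ^^ n"] by (simp add: comp_def)
qed

lemma ker_diff: "bounded_clinear f \<Longrightarrow> x \<in> ker f \<Longrightarrow> y \<in> ker f \<Longrightarrow> x - y \<in> ker f"
  by (simp add: ker_def bcl_diff)

section \<open>Riesz representation and adjoints\<close>

lemma quad_nonneg_zero:
  fixes a b :: real
  assumes "b \<ge> 0" "\<forall>s. s * a + s^2 * b \<ge> 0"
  shows "a = 0"
proof (rule ccontr)
  assume a: "a \<noteq> 0"
  define s where "s = - a / (b + 1)"
  have b1: "b + 1 > 0" using assms(1) by simp
  have "a + s * b = a / (b+1)" unfolding s_def using b1 by (simp add: field_simps)
  moreover have "s * a + s^2 * b = s * (a + s * b)" by (simp add: power2_eq_square algebra_simps)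
  ultimately have "s * a + s^2 * b = s * (a / (b+1))" by simp
  also have "\<dots> = -(a^2) / ((b+1)^2)" unfolding s_def by (simp add: power2_eq_square)
  also have "\<dots> < 0" using a assms(1) by simp
  finally show False using assms(2) by smt
qed

lemma minimising_sequence_Cauchy:
  fixes \<phi> :: "'a::metric_space \<Rightarrow> real" and xs :: "nat \<Rightarrow> 'a"
  assumes close: "\<And>x y. (dist x y)^2 \<le> 2 * (\<phi> x - I) + 2 * (\<phi> y - I)"
    and xs: "\<And>n. \<phi> (xs n) < I + inverse (real (Suc n))"
  shows "Cauchy xs"
proof (rule metric_CauchyI)
  fix e :: real assume e: "e > 0"
  obtain M :: nat where M: "4 / e^2 < real M" using reals_Archimedean2 by blast
  have small: "4 * inverse (real (Suc M)) < e^2"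
  proof -
    have e2: "0 < e^2" using e by simp
    have h: "4 < real M * e^2" using M e2 by (simp add: field_simps)
    have "e^2 * real (Suc M) = e^2 + real M * e^2" by (simp add: algebra_simps)
    then have "4 < e^2 * real (Suc M)" using h e2 by linarith
    then show ?thesis by (simp add: field_simps)
  qed
  have "dist (xs m) (xs n) < e" if "m \<ge> M" "n \<ge> M" for m n
  proof -
    have im: "inverse (real (Suc m)) \<le> inverse (real (Suc M))" using that by (simp add: field_simps)
    have "inverse (real (Suc n)) \<le> inverse (real (Suc M))" using that by (simp add: field_simps)
    then have "(dist (xs m) (xs n))^2 < e^2"
      using close[of "xs m" "xs n"] xs[of m] xs[of n] im small by (smt (verit))
    then show ?thesis using e by (simp add: power_less_imp_less_base)
  qed
  then show "\<exists>M. \<forall>m\<ge>M. \<forall>n\<ge>M. dist (xs m) (xs n) < e" by blast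
qed

text \<open>For a bounded linear functional g on a Hilbert space, the functional
  norm(x)^2 - 2 Re g(x) attains its infimum: by the parallelogram law a minimising
  sequence is Cauchy.\<close>
lemma riesz_minimiser:
  fixes g :: "'a::chilbert \<Rightarrow> complex"
  assumes add: "\<And>x y. g (x+y) = g x + g y" and sc: "\<And>c x. g (scaleC c x) = c * g x"
    and bd: "\<And>x. cmod (g x) \<le> K * norm x"
  shows "\<exists>z. \<forall>x. (norm z)^2 - 2 * Re (g z) \<le> (norm x)^2 - 2 * Re (g x)"
proof -
  define \<phi> where "\<phi> x = (norm x)^2 - 2 * Re (g x)" for x
  have lb: "\<phi> x \<ge> - (K^2)" for x
  proof -
    have "Re (g x) \<le> K * norm x" using bd[of x] complex_Re_le_cmod[of "g x"] by linarith
    moreover have "0 \<le> (norm x - K)^2" by simp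
    ultimately show ?thesis unfolding \<phi>_def by (simp add: power2_eq_square algebra_simps)
  qed
  define I where "I = Inf (range \<phi>)"
  have bdd: "bdd_below (range \<phi>)" using lb by (intro bdd_belowI[of _ "-(K^2)"]) auto
  have I_le: "I \<le> \<phi> x" for x unfolding I_def by (rule cInf_lower[OF _ bdd]) simp
  have "\<exists>x. \<phi> x < I + inverse (real (Suc n))" for n
  proof -
    have "Inf (range \<phi>) < I + inverse (real (Suc n))" unfolding I_def by simp
    then show ?thesis by (metis cInf_lessD empty_not_UNIV image_is_empty rangeE)
  qed
  then obtain xs where xs: "\<And>n. \<phi> (xs n) < I + inverse (real (Suc n))" by metis
  have close: "(dist x y)^2 \<le> 2 * (\<phi> x - I) + 2 * (\<phi> y - I)" for x y
  proof -
    define m where "m = scaleC (1/2) (x + y)"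
    have "Re (g m) = (Re (g x) + Re (g y)) / 2" unfolding m_def by (simp add: sc add)
    then have "(dist x y)^2 = 2 * \<phi> x + 2 * \<phi> y - 4 * \<phi> m"
      unfolding dist_norm parallelogram_midpoint m_def[symmetric] \<phi>_def by (simp add: algebra_simps)
    then show ?thesis using I_le[of m] by simp
  qed
  have "Cauchy xs" by (rule minimising_sequence_Cauchy[OF close xs])
  then obtain z where z: "xs \<longlonglongrightarrow> z" using Cauchy_convergent convergent_def by blast
  have g_linear: "bounded_linear g"
  proof (rule bounded_linear_intro[where K=K])
    show "g (x + y) = g x + g y" for x y by (rule add)
    show "g (scaleR r x) = scaleR r (g x)" for r x
      by (simp add: scaleR_scaleC sc scaleR_conv_of_real)
    show "norm (g x) \<le> norm x * K" for x using bd[of x] by (simp add: mult.commute)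
  qed
  have "(\<lambda>n. \<phi> (xs n)) \<longlonglongrightarrow> \<phi> z" unfolding \<phi>_def
    by (intro tendsto_intros bounded_linear.tendsto[OF g_linear] z)
  moreover have "(\<lambda>n. I + inverse (real (Suc n))) \<longlonglongrightarrow> I + 0"
    by (intro tendsto_intros LIMSEQ_inverse_real_of_nat)
  ultimately have "\<phi> z \<le> I + 0" using xs by (intro LIMSEQ_le) (auto intro: less_imp_le)
  then have "\<phi> z \<le> \<phi> x" for x using I_le[of x] by simp
  then show ?thesis unfolding \<phi>_def by blast
qed

text \<open>Riesz representation: every bounded linear functional is an inner product.  The
  minimiser z of norm(x)^2 - 2 Re g(x) represents g, by varying z in every direction.\<close>
lemma riesz:
  fixes g :: "'a::chilbert \<Rightarrow> complex"
  assumes add: "\<And>x y. g (x+y) = g x + g y" and sc: "\<And>c x. g (scaleC c x) = c * g x"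
    and bd: "\<And>x. cmod (g x) \<le> K * norm x"
  shows "\<exists>z. \<forall>x. g x = cinner z x"
proof -
  obtain z where min: "\<And>x. (norm z)^2 - 2 * Re (g z) \<le> (norm x)^2 - 2 * Re (g x)"
    using riesz_minimiser[OF add sc bd] by blast
  have re: "Re (cinner z w) = Re (g w)" for w
  proof -
    have "\<forall>s. s * (2 * (Re (cinner z w) - Re (g w))) + s^2 * (norm w)^2 \<ge> 0"
    proof
      fix s :: real
      have "(norm (z + scaleC (of_real s) w))^2 - 2 * Re (g (z + scaleC (of_real s) w))
          = (norm z)^2 - 2 * Re (g z) + (s * (2 * (Re (cinner z w) - Re (g w))) + s^2 * (norm w)^2)"
        by (simp add: norm_add_sq cinner_scaleC_right norm_scaleC add sc power_mult_distrib
            algebra_simps)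
      then show "s * (2 * (Re (cinner z w) - Re (g w))) + s^2 * (norm w)^2 \<ge> 0"
        using min[of "z + scaleC (of_real s) w"] by linarith
    qed
    then have "2 * (Re (cinner z w) - Re (g w)) = 0" by (intro quad_nonneg_zero) simp_all
    then show ?thesis by simp
  qed
  have "g w = cinner z w" for w
  proof (rule complex_eqI)
    show "Re (g w) = Re (cinner z w)" using re[of w] by simp
    have "Re (cinner z (scaleC \<i> w)) = Re (g (scaleC \<i> w))" by (rule re)
    then show "Im (g w) = Im (cinner z w)" by (simp add: cinner_scaleC_right sc)
  qed
  then show ?thesis by blast
qed

lemma cadjoint_is_adjoint:
  fixes T :: "'a::chilbert \<Rightarrow> 'a"
  assumes T: "bounded_clinear T"
  shows "cinner (T x) y = cinner x (cadjoint T y)"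
proof -
  obtain K where K: "K \<ge> 1" "\<forall>x. norm (T x) \<le> norm x * K" using bcl_bound[OF T] by blast
  have "\<exists>z. \<forall>x. cinner (T x) y = cinner x z" for y
  proof -
    have "\<exists>z. \<forall>x. cinner y (T x) = cinner z x"
    proof (rule riesz[where K="norm y * K"])
      show "cinner y (T (x + x')) = cinner y (T x) + cinner y (T x')" for x x'
        by (simp add: bcl_add[OF T] cinner_add_right)
      show "cinner y (T (scaleC c x)) = c * cinner y (T x)" for c x
        by (simp add: bcl_scaleC[OF T] cinner_scaleC_right)
      show "cmod (cinner y (T x)) \<le> norm y * K * norm x" for x
        using cauchy_schwarz[of y "T x"] K mult_left_mono[of "norm (T x)" "norm x * K" "norm y"]
        by (simp add: algebra_simps)
    qed
    then show ?thesis by (metis cinner_commute)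
  qed
  then have "\<exists>B. \<forall>x y. cinner (T x) y = cinner x (B y)" by metis
  from someI_ex[OF this] show ?thesis unfolding cadjoint_def by blast
qed

lemma adjoint_bounded:
  fixes T A :: "'a::complex_inner \<Rightarrow> 'a"
  assumes T: "bounded_clinear T" and bound: "\<And>x. norm (T x) \<le> norm x * K"
    and adj: "\<And>x y. cinner (T x) y = cinner x (A y)"
  shows "bounded_clinear A" and "norm (A y) \<le> norm y * K"
proof -
  show bound_A: "norm (A y) \<le> norm y * K" for y
  proof (cases "A y = 0")
    case True
    have "0 \<le> norm y * K" using bound[of y] norm_ge_zero[of "T y"] by linarith
    then show ?thesis using True by simp
  next
    case False
    have "(norm (A y))^2 = Re (cinner (T (A y)) y)" by (simp add: adj norm_sq_cinner)
    also have "\<dots> \<le> cmod (cinner (T (A y)) y)" by (rule complex_Re_le_cmod)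
    also have "\<dots> \<le> norm (T (A y)) * norm y" by (rule cauchy_schwarz)
    also have "\<dots> \<le> norm (A y) * K * norm y" using bound by (simp add: mult_right_mono)
    finally have "norm (A y) * norm (A y) \<le> norm (A y) * (norm y * K)"
      by (simp add: power2_eq_square algebra_simps)
    then show ?thesis using False by simp
  qed
  show "bounded_clinear A"
  proof (rule bclI[where K=K])
    show "A (x + y) = A x + A y" for x y
      by (rule cinner_ext) (metis adj cinner_add_right)
    show "A (scaleC c x) = scaleC c (A x)" for c x
      by (rule cinner_ext) (metis adj cinner_scaleC_right)
  qed (rule bound_A)
qed

lemma pointwise_limit_bcl:
  fixes B :: "nat \<Rightarrow> 'a::complex_inner \<Rightarrow> 'a"
  assumes B: "\<And>n. bounded_clinear (B n)" and lim: "\<And>x. (\<lambda>n. B n x) \<longlonglongrightarrow> P x"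
    and bound: "\<And>x. norm (P x) \<le> norm x * K"
  shows "bounded_clinear P"
proof (rule bclI[OF _ _ bound])
  show "P (x + y) = P x + P y" for x y
    using tendsto_add[OF lim[of x] lim[of y]] lim[of "x + y"]
    by (simp add: bcl_add[OF B] LIMSEQ_unique)
  show "P (scaleC a x) = scaleC a (P x)" for a x
    using bounded_linear.tendsto[OF bcl_linear[OF bcl_smult[OF bcl_id]] lim[of x]]
      lim[of "scaleC a x"]
    by (simp add: bcl_scaleC[OF B] LIMSEQ_unique)
qed

lemma geometric_iterates_converge:
  fixes B :: "'a::chilbert \<Rightarrow> 'a" and s :: real
  assumes B: "bounded_clinear B" and s: "0 \<le> s" "s < 1"
    and step: "\<And>n x. norm ((B ^^ n) x - (B ^^ Suc n) x) \<le> s^n * norm x"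
  obtains P where "bounded_clinear P" "\<And>x. (\<lambda>n. (B ^^ n) x) \<longlonglongrightarrow> P x"
    "\<And>n x. norm (P x - (B ^^ n) x) \<le> s^n / (1 - s) * norm x"
proof -
  define d where "d x i = (B ^^ i) x - (B ^^ Suc i) x" for x i
  have geometric: "summable (\<lambda>i. s^i * c)" for c
    using s by (intro summable_mult2 summable_geometric) simp
  have norm_summable: "summable (\<lambda>i. norm (d x i))" for x
    using step unfolding d_def by (intro summable_comparison_test[OF _ geometric]) auto
  have summable: "summable (d x)" for x by (rule summable_norm_cancel) (rule norm_summable)
  have telescope: "(B ^^ n) x = x - (\<Sum>i<n. d x i)" for n x
    unfolding d_def sum_lessThan_telescope'[of "\<lambda>i. (B ^^ i) x"] by simp
  define P where "P x = x - suminf (d x)" for x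
  have lim: "(\<lambda>n. (B ^^ n) x) \<longlonglongrightarrow> P x" for x
    unfolding telescope P_def by (intro tendsto_diff tendsto_const summable_LIMSEQ summable)
  have error: "norm (P x - (B ^^ n) x) \<le> s^n / (1 - s) * norm x" for n x
  proof -
    have "P x - (B ^^ n) x = - (\<Sum>i. d x (i + n))"
      unfolding P_def telescope using suminf_split_initial_segment[OF summable, of x n] by simp
    then have "norm (P x - (B ^^ n) x) = norm (\<Sum>i. d x (i + n))" by simp
    also have "\<dots> \<le> (\<Sum>i. norm (d x (i + n)))"
      using summable_ignore_initial_segment[OF norm_summable[of x]] by (rule summable_norm)
    also have "\<dots> \<le> (\<Sum>i. s^i * (s^n * norm x))"
    proof (rule suminf_le)
      show "norm (d x (i + n)) \<le> s^i * (s^n * norm x)" for i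
        using step[of "i + n" x] unfolding d_def power_add by (simp add: mult_ac)
      show "summable (\<lambda>i. norm (d x (i + n)))"
        using summable_ignore_initial_segment[OF norm_summable[of x]] .
    qed (rule geometric)
    also have "\<dots> = s^n / (1 - s) * norm x"
      using s by (simp add: suminf_mult2[symmetric] suminf_geometric)
    finally show ?thesis .
  qed
  have "norm (P x) \<le> norm x * (1 / (1 - s) + 1)" for x
    using norm_triangle_sub[of "P x" x] error[of x 0] by (simp add: algebra_simps)
  then have "bounded_clinear P" by (rule pointwise_limit_bcl[OF bcl_funpow[OF B] lim])
  then show ?thesis using that lim error by blast
qed

section \<open>The kernel projection of a bounded idempotent\<close>

text \<open>An idempotent does not shrink vectors orthogonal to its kernel: for such x,
  Fx = x - (x - Fx) with x - Fx in ker F orthogonal to x.\<close>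
lemma idempotent_norm_on_ker_perp:
  assumes F: "bounded_clinear F" and idem: "\<And>x. F (F x) = F x"
    and x: "x \<in> orth_in UNIV (ker F)"
  shows "norm x \<le> norm (F x)"
proof -
  define u where "u = x - F x"
  have "F u = 0" unfolding u_def using idem bcl_diff[OF F] by simp
  then have "cinner x u = 0" using x cinner_orth_sym unfolding orth_in_def ker_def by blast
  then have "(norm (F x))^2 = (norm x)^2 + (norm u)^2"
    using norm_diff_sq[of x u] unfolding u_def by simp
  then have "(norm x)^2 \<le> (norm (F x))^2" by simp
  then show ?thesis by (rule power2_le_imp_le) simp
qed

text \<open>Setting for the construction: F is a bounded idempotent with adjoint G and
  norm bound K \<ge> 1.  The damped operator x \<mapsto> x - (G F x)/K^2 fixes inner products
  with ker F and contracts the orthogonal complement of ker F.\<close>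
locale damped_idempotent =
  fixes F G :: "'a::chilbert \<Rightarrow> 'a" and K :: real
  assumes F: "bounded_clinear F"
    and adjoint: "\<And>x y. cinner (F x) y = cinner x (G y)"
    and idempotent: "\<And>x. F (F x) = F x"
    and bound: "\<And>x. norm (F x) \<le> norm x * K"
    and K_ge_1: "1 \<le> K"
begin

lemma G_bcl: "bounded_clinear G" and G_bound: "norm (G y) \<le> norm y * K"
  using adjoint_bounded[OF F bound adjoint] by blast+

definition damp :: "'a \<Rightarrow> 'a" where
  "damp x = x - scaleC (of_real (1 / K^2)) (G (F x))"

definition rate :: real where
  "rate = sqrt (1 - 1 / K^2)"

lemma rate_bounds: "0 \<le> rate" "rate < 1"
proof -
  have K2: "1 \<le> K^2" using one_le_power[OF K_ge_1, of 2] .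
  then have "0 \<le> 1 - 1 / K^2" "1 - 1 / K^2 < 1" using K_ge_1 by (simp_all add: divide_le_eq_1)
  then show "0 \<le> rate" "rate < 1"
    unfolding rate_def using real_sqrt_ge_zero real_sqrt_less_iff[of _ 1] by auto
qed

lemma damp_bcl: "bounded_clinear damp"
proof -
  have "bounded_clinear (\<lambda>x. x - scaleC (of_real (1 / K^2)) (G (F x)))"
    by (rule bcl_minus_fun[OF bcl_id bcl_smult[OF bcl_comp[OF G_bcl F]]])
  then show ?thesis unfolding damp_def[abs_def] .
qed

lemma cinner_ker_GF: "F y = 0 \<Longrightarrow> cinner y (G (F x)) = 0"
  using adjoint[of y "F x"] by simp

lemma cinner_ker_damp: "F y = 0 \<Longrightarrow> cinner y (damp x) = cinner y x"
  by (simp add: damp_def cinner_diff_right cinner_scaleC_right cinner_ker_GF)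

lemma cinner_ker_damp_power: "F y = 0 \<Longrightarrow> cinner y ((damp ^^ n) x) = cinner y x"
  by (induction n) (simp_all add: cinner_ker_damp)

lemma GF_ker_perp: "scaleC c (G (F x)) \<in> orth_in UNIV (ker F)"
  by (simp add: orth_in_def ker_def cinner_scaleC_right cinner_ker_GF)

lemma damp_power_ker_perp:
  "x \<in> orth_in UNIV (ker F) \<Longrightarrow> (damp ^^ n) x \<in> orth_in UNIV (ker F)"
  by (simp add: orth_in_def ker_def cinner_ker_damp_power)

text \<open>On the orthogonal complement of ker F the damped operator is a strict contraction:
  Re \<langle>x, G F x\<rangle> = |Fx|^2 \<ge> |x|^2 while |G F x|^2 \<le> K^2 |Fx|^2.\<close>
lemma damp_contraction:
  assumes x: "x \<in> orth_in UNIV (ker F)"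
  shows "(norm (damp x))^2 \<le> rate^2 * (norm x)^2"
proof -
  define M where "M = K^2"
  have M: "1 \<le> M" unfolding M_def using K_ge_1 by (simp add: one_le_power)
  define a where "a = (norm (F x))^2"
  have GF_sq: "(norm (G (F x)))^2 \<le> M * a"
  proof -
    have "norm (G (F x)) \<le> K * norm (F x)" using G_bound[of "F x"] by (simp add: mult.commute)
    then have "(norm (G (F x)))^2 \<le> (K * norm (F x))^2" by (simp add: power_mono)
    then show ?thesis unfolding a_def M_def by (simp add: power_mult_distrib)
  qed
  have "(norm (damp x))^2 = (norm x)^2 - 2 * Re (cinner x (scaleC (of_real (1/M)) (G (F x))))
      + (norm (scaleC (of_real (1/M)) (G (F x))))^2"
    unfolding damp_def M_def by (rule norm_diff_sq)
  also have "Re (cinner x (scaleC (of_real (1/M)) (G (F x)))) = a / M"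
    unfolding a_def using adjoint[of x "F x"]
    by (simp add: cinner_scaleC_right norm_sq_cinner[of "F x"])
  also have "(norm (scaleC (of_real (1/M)) (G (F x))))^2 = (norm (G (F x)))^2 / M^2"
    using M by (simp add: norm_scaleC norm_divide power_mult_distrib power_divide)
  also have "\<dots> \<le> M * a / M^2" using GF_sq M by (simp add: divide_right_mono)
  also have "M * a / M^2 = a / M" using M by (simp add: power2_eq_square)
  finally have "(norm (damp x))^2 \<le> (norm x)^2 - a / M" by simp
  also have "\<dots> \<le> (norm x)^2 - (norm x)^2 / M"
    using idempotent_norm_on_ker_perp[OF F idempotent x] M unfolding a_def
    by (simp add: divide_right_mono power_mono)
  also have "\<dots> = rate^2 * (norm x)^2"
    using K_ge_1 unfolding rate_def M_def by (simp add: algebra_simps)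
  finally show ?thesis .
qed

lemma damp_power_contraction:
  assumes x: "x \<in> orth_in UNIV (ker F)"
  shows "norm ((damp ^^ n) x) \<le> rate^n * norm x"
proof (induction n)
  case 0 then show ?case by simp
next
  case (Suc n)
  have "(norm (damp ((damp ^^ n) x)))^2 \<le> (rate * norm ((damp ^^ n) x))^2"
    using damp_contraction[OF damp_power_ker_perp[OF x]] by (simp add: power_mult_distrib)
  then have "norm (damp ((damp ^^ n) x)) \<le> rate * norm ((damp ^^ n) x)"
    by (rule power2_le_imp_le) (simp add: rate_bounds)
  also have "\<dots> \<le> rate * (rate^n * norm x)" using Suc rate_bounds by (simp add: mult_left_mono)
  finally show ?case by (simp add: mult.assoc)
qed

text \<open>The n-th increment of the iteration is the n-th iterate of the vector
  (G F x)/K^2, which lies in the complement of ker F and has norm at most |x|.\<close>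
lemma damp_increment: "norm ((damp ^^ n) x - (damp ^^ Suc n) x) \<le> rate^n * norm x"
proof -
  define v where "v = scaleC (of_real (1 / K^2)) (G (F x))"
  have "(damp ^^ Suc n) x = (damp ^^ n) (damp x)" by (simp add: funpow_Suc_right del: funpow.simps)
  then have "(damp ^^ n) x - (damp ^^ Suc n) x = (damp ^^ n) v"
    using bcl_diff[OF bcl_funpow[OF damp_bcl]] unfolding damp_def v_def by simp
  also have "norm ((damp ^^ n) v) \<le> rate^n * norm v"
    unfolding v_def by (rule damp_power_contraction[OF GF_ker_perp])
  also have "norm v \<le> norm x"
  proof -
    have "norm (G (F x)) \<le> norm (F x) * K" by (rule G_bound)
    also have "\<dots> \<le> norm x * K * K" using bound[of x] K_ge_1 by (simp add: mult_right_mono)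
    finally have "norm (G (F x)) \<le> norm x * K * K" .
    moreover have "norm v = norm (G (F x)) / K^2"
      unfolding v_def using K_ge_1 by (simp only: norm_scaleC norm_of_real) simp
    ultimately show ?thesis using K_ge_1 by (simp add: divide_le_eq power2_eq_square mult.assoc)
  qed
  then have "rate^n * norm v \<le> rate^n * norm x" using rate_bounds by (simp add: mult_left_mono)
  finally show ?thesis .
qed

theorem kernel_projection:
  "\<exists>P. bounded_clinear P \<and> is_orth_proj P (ker F) \<and>
     (\<forall>e>0. \<exists>n. \<forall>x. norm (P x - (damp ^^ n) x) \<le> e * norm x)"
proof -
  obtain P where P: "bounded_clinear P" and lim: "\<And>x. (\<lambda>n. (damp ^^ n) x) \<longlonglongrightarrow> P x"
    and error: "\<And>n x. norm (P x - (damp ^^ n) x) \<le> rate^n / (1 - rate) * norm x"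
    using geometric_iterates_converge[OF damp_bcl rate_bounds damp_increment] by blast
  have in_ker: "F (P x) = 0" for x
  proof -
    have "(\<lambda>n. (damp ^^ Suc n) x) \<longlonglongrightarrow> damp (P x)"
      using bounded_linear.tendsto[OF bcl_linear[OF damp_bcl] lim[of x]] by simp
    then have "damp (P x) = P x" using LIMSEQ_Suc[OF lim[of x]] LIMSEQ_unique by blast
    then have "G (F (P x)) = 0" using K_ge_1 by (simp add: damp_def)
    then have "(norm (F (P x)))^2 = 0" using adjoint[of "P x" "F (P x)"] idempotent
      by (simp add: norm_sq_cinner)
    then show ?thesis by simp
  qed
  have orth: "cinner y (x - P x) = 0" if "F y = 0" for x y
  proof -
    have "(\<lambda>n. cinner y ((damp ^^ n) x)) \<longlonglongrightarrow> cinner y (P x)"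
      by (rule bounded_linear.tendsto[OF bounded_linear_cinner_right lim])
    then have "(\<lambda>n. cinner y x) \<longlonglongrightarrow> cinner y (P x)" by (simp add: cinner_ker_damp_power[OF that])
    then have "cinner y (P x) = cinner y x" by (simp add: LIMSEQ_const_iff)
    then show ?thesis by (simp add: cinner_diff_right)
  qed
  have "\<exists>n. \<forall>x. norm (P x - (damp ^^ n) x) \<le> e * norm x" if e: "e > 0" for e
  proof -
    have "(\<lambda>n. rate^n / (1 - rate)) \<longlonglongrightarrow> 0"
      using LIMSEQ_power_zero[of rate] rate_bounds tendsto_divide_zero by fastforce
    from LIMSEQ_D[OF this e] obtain n where "norm (rate^n / (1 - rate) - 0) < e" by blast
    then have small: "rate^n / (1 - rate) \<le> e" using rate_bounds by simp
    have "norm (P x - (damp ^^ n) x) \<le> e * norm x" for x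
      using error[of x n] mult_right_mono[OF small norm_ge_zero[of x]] by (rule order_trans)
    then show ?thesis by blast
  qed
  then show ?thesis using P in_ker orth unfolding is_orth_proj_def ker_def by auto
qed

end

section \<open>Polynomials evaluated at an operator\<close>

text \<open>peval p T is the operator p(T), computed by Horner's scheme.\<close>
definition peval :: "complex poly \<Rightarrow> ('a::complex_inner \<Rightarrow> 'a) \<Rightarrow> 'a \<Rightarrow> 'a" where
  "peval p T = foldr (\<lambda>a f. (\<lambda>x. scaleC a x + T (f x))) (coeffs p) (\<lambda>x. 0)"

lemma peval_0 [simp]: "peval 0 T = (\<lambda>x. 0)"
  by (simp add: peval_def)

lemma peval_pCons:
  assumes T: "bounded_clinear T"
  shows "peval (pCons a p) T = (\<lambda>x. scaleC a x + T (peval p T x))"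
proof (cases "a = 0 \<and> p = 0")
  case True then show ?thesis using T by (simp add: peval_def)
next
  case False
  then have "coeffs (pCons a p) = a # coeffs p" by (auto simp: coeffs_pCons_eq_cCons cCons_def)
  then show ?thesis by (simp add: peval_def)
qed

lemma peval_add:
  assumes T: "bounded_clinear T"
  shows "peval (p + q) T = (\<lambda>x. peval p T x + peval q T x)"
proof (induction p arbitrary: q rule: pCons_induct)
  case 0 then show ?case by simp
next
  case (pCons a p)
  obtain b q' where q: "q = pCons b q'" by (rule pCons_cases)
  show ?case unfolding q add_pCons peval_pCons[OF T] pCons.IH
    by (rule ext) (simp add: bcl_add[OF T] scaleC_add_left algebra_simps)
qed

lemma peval_smult:
  assumes T: "bounded_clinear T"
  shows "peval (smult c p) T = (\<lambda>x. scaleC c (peval p T x))"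
proof (induction p rule: pCons_induct)
  case 0 then show ?case by simp
next
  case (pCons a p)
  show ?case unfolding smult_pCons peval_pCons[OF T] pCons.IH
    by (rule ext) (simp add: bcl_scaleC[OF T] scaleC_add_right scaleC_scaleC)
qed

lemma peval_mult:
  assumes T: "bounded_clinear T"
  shows "peval (p * q) T = peval p T \<circ> peval q T"
proof (induction p rule: pCons_induct)
  case 0 then show ?case by (simp add: comp_def)
next
  case (pCons a p)
  show ?case
    unfolding mult_pCons_left peval_add[OF T] peval_smult[OF T] peval_pCons[OF T] pCons.IH
    by (rule ext) simp
qed

lemma peval_1: "bounded_clinear T \<Longrightarrow> peval 1 T = (\<lambda>x. x)"
  using peval_pCons[of T 1 0] by (simp add: one_pCons scaleC_one)

lemma peval_linear_factor: "bounded_clinear T \<Longrightarrow> peval [:-c, 1:] T = (\<lambda>x. T x - scaleC c x)"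
  using peval_pCons[of T "-c" "[:1:]"] peval_pCons[of T 1 0]
  by (simp add: fun_eq_iff scaleC_minus_left scaleC_one)

lemma peval_power: "bounded_clinear T \<Longrightarrow> peval (p ^ n) T = peval p T ^^ n"
  by (induction n) (simp_all add: peval_1 peval_mult id_def)

lemma peval_bcl: "bounded_clinear T \<Longrightarrow> bounded_clinear (peval p T)"
proof (induction p rule: pCons_induct)
  case 0 then show ?case using bcl_smult[OF bcl_id, of 0] by simp
next
  case (pCons a p)
  then show ?case
    using bcl_plus[OF bcl_smult[OF bcl_id] bcl_comp[OF pCons.prems pCons.IH[OF pCons.prems]]]
    by (simp add: peval_pCons)
qed

lemma peval_in_star_poly_alg:
  assumes T: "bounded_clinear T" and mem: "T \<in> star_poly_alg T0"
  shows "peval p T \<in> star_poly_alg T0"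
proof (induction p rule: pCons_induct)
  case 0
  have "(\<lambda>x. scaleC 0 ((\<lambda>x. x) x)) \<in> star_poly_alg T0"
    by (intro star_poly_alg.smult star_poly_alg.unit)
  then show ?case by simp
next
  case (pCons a p)
  have "(\<lambda>x. (\<lambda>x. scaleC a ((\<lambda>x. x) x)) x + (T \<circ> peval p T) x) \<in> star_poly_alg T0"
    by (intro star_poly_alg.add star_poly_alg.smult star_poly_alg.unit star_poly_alg.comp mem
        pCons.IH)
  then show ?case by (simp add: peval_pCons[OF T])
qed

lemma opprod_peval:
  assumes T: "bounded_clinear T"
  shows "opprod T t k m = peval (\<Prod>i\<in>{1..m}. [:-t i, 1:] ^ k i) T"
proof (induction m)
  case 0 then show ?case by (simp add: peval_1[OF T])
next
  case (Suc m)
  have split: "(\<Prod>i\<in>{1..Suc m}. [:-t i, 1:] ^ k i)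
      = [:-t (Suc m), 1:] ^ k (Suc m) * (\<Prod>i\<in>{1..m}. [:-t i, 1:] ^ k i)"
    by (simp add: prod.cl_ivl_Suc mult.commute)
  show ?case
    unfolding split peval_mult[OF T] peval_power[OF T] peval_linear_factor[OF T] Suc.IH[symmetric]
    by simp
qed

lemma opprod_bcl: "bounded_clinear T \<Longrightarrow> bounded_clinear (opprod T t k m)"
  unfolding opprod_peval by (rule peval_bcl)

lemma ker_opprod_mono:
  assumes T: "bounded_clinear T"
  shows "ker (opprod T t k m) \<subseteq> ker (opprod T t k (Suc m))"
  using bcl_zero[OF bcl_funpow[OF bcl_minus_fun[OF T bcl_smult[OF bcl_id]]]]
  by (auto simp: ker_def)

section \<open>Idempotents from coprime factorisations\<close>

lemma coprime_linear_factors: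
  assumes "(s::complex) \<noteq> t"
  shows "coprime [:-s, 1:] [:-t, 1:]"
proof (rule coprimeI)
  fix c assume "c dvd [:-s, 1:]" "c dvd [:-t, 1:]"
  then have "c dvd [:-s, 1:] - [:-t, 1:]" by (rule dvd_diff)
  then have "c dvd [:t - s:]" by simp
  moreover have "is_unit [:t - s:]" using assms by (simp add: is_unit_const_poly_iff dvd_field_iff)
  ultimately show "is_unit c" by (rule dvd_unit_imp_unit)
qed

text \<open>If p and q are coprime and (pq)(T) = 0, then with a Bezout identity a p + b q = 1
  the operator E = (a p)(T) is idempotent and has the same kernel as p(T).\<close>
lemma coprime_idempotent:
  assumes T: "bounded_clinear T" and cop: "coprime p q" and annihilates: "peval (p * q) T = (\<lambda>x. 0)"
  obtains f where "\<And>x. peval f T (peval f T x) = peval f T x" "ker (peval f T) = ker (peval p T)"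
proof -
  obtain a b where bezout: "a * p + b * q = 1"
    using bezout_coefficients_fst_snd[of p q] cop by (metis coprime_imp_gcd_eq_1)
  define f where "f = a * p"
  have pq0: "peval p T (peval q T x) = 0" for x
    using fun_cong[OF annihilates, of x] by (simp add: peval_mult[OF T])
  have zero: "peval r T 0 = 0" for r by (rule bcl_zero[OF peval_bcl[OF T]])
  have square: "f * f = f + smult (-1) ((a * b) * (p * q))"
  proof -
    have "f * f = f * (a * p + b * q) - (a * b) * (p * q)" unfolding f_def by (simp add: algebra_simps)
    then show ?thesis using bezout by simp
  qed
  have idem: "peval f T (peval f T x) = peval f T x" for x
  proof -
    have "peval f T (peval f T x) = peval (f * f) T x" by (simp add: peval_mult[OF T])
    also have "\<dots> = peval f T x"
      unfolding square peval_add[OF T] peval_smult[OF T] peval_mult[OF T] by (simp add: pq0 zero)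
    finally show ?thesis .
  qed
  have p_eq: "p = p * f + b * (p * q)"
  proof -
    have "p = p * (a * p + b * q)" using bezout by simp
    then show ?thesis unfolding f_def by (simp add: algebra_simps)
  qed
  have "ker (peval f T) = ker (peval p T)"
  proof
    show "ker (peval f T) \<subseteq> ker (peval p T)"
    proof
      fix x assume "x \<in> ker (peval f T)"
      then have "peval (p * f + b * (p * q)) T x = 0"
        by (simp add: ker_def peval_add[OF T] peval_mult[OF T] pq0 zero)
      then show "x \<in> ker (peval p T)" using p_eq by (simp add: ker_def)
    qed
    show "ker (peval p T) \<subseteq> ker (peval f T)"
      unfolding f_def by (auto simp: ker_def peval_mult[OF T] zero)
  qed
  then show ?thesis using that idem by blast
qed

lemma opprod_factors_coprime:
  fixes t :: "nat \<Rightarrow> complex"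
  assumes inj: "inj_on t {1..N}" and mN: "m \<le> N"
  shows "coprime (\<Prod>i\<in>{1..m}. [:-t i, 1:] ^ k i) (\<Prod>j\<in>{Suc m..N}. [:-t j, 1:] ^ k j)"
proof (intro prod_coprime_left prod_coprime_right)
  fix i j assume i: "i \<in> {1..m}" and j: "j \<in> {Suc m..N}"
  then have "t i \<noteq> t j" using inj mN by (auto dest: inj_onD)
  then show "coprime ([:-t i, 1:] ^ k i) ([:-t j, 1:] ^ k j)"
    by (simp add: coprime_linear_factors)
qed

definition approx_by :: "('a::complex_inner \<Rightarrow> 'a) set \<Rightarrow> ('a \<Rightarrow> 'a) \<Rightarrow> bool" where
  "approx_by S P \<longleftrightarrow> (\<forall>e>0. \<exists>C\<in>S. \<forall>x. norm (P x - C x) \<le> e * norm x)"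

lemma cstar_genI:
  assumes "bounded_clinear P" and "approx_by (star_poly_alg T) P"
  shows "P \<in> cstar_gen T"
  unfolding cstar_gen_def
proof (intro CollectI conjI assms allI impI)
  fix e :: real assume e: "e > 0"
  then obtain C where C: "C \<in> star_poly_alg T" "\<And>x. norm (P x - C x) \<le> e / 2 * norm x"
    using assms(2) unfolding approx_by_def by (meson half_gt_zero)
  have "onorm (\<lambda>x. P x - C x) \<le> e / 2" using e C(2) by (intro onorm_bound) auto
  then show "\<exists>C\<in>star_poly_alg T. onorm (\<lambda>x. P x - C x) < e" using C(1) e by force
qed

lemma approx_by_diff:
  assumes "approx_by (star_poly_alg T) P" and "approx_by (star_poly_alg T) Q"
  shows "approx_by (star_poly_alg T) (\<lambda>x. P x - Q x)"
  unfolding approx_by_def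
proof (intro allI impI)
  fix e :: real assume e: "e > 0"
  obtain C where C: "C \<in> star_poly_alg T" "\<And>x. norm (P x - C x) \<le> e / 2 * norm x"
    using assms(1) e unfolding approx_by_def by (meson half_gt_zero)
  obtain D where D: "D \<in> star_poly_alg T" "\<And>x. norm (Q x - D x) \<le> e / 2 * norm x"
    using assms(2) e unfolding approx_by_def by (meson half_gt_zero)
  have "(\<lambda>x. C x + scaleC (-1) (D x)) \<in> star_poly_alg T"
    by (intro star_poly_alg.add star_poly_alg.smult C(1) D(1))
  moreover have "norm ((P x - Q x) - (C x + scaleC (-1) (D x))) \<le> e * norm x" for x
  proof -
    have "norm ((P x - Q x) - (C x + scaleC (-1) (D x))) \<le> norm (P x - C x) + norm (Q x - D x)"
      using norm_triangle_ineq4[of "P x - C x" "Q x - D x"] by (simp add: algebra_simps)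
    then show ?thesis using C(2)[of x] D(2)[of x] by simp
  qed
  ultimately show "\<exists>C\<in>star_poly_alg T. \<forall>x. norm ((P x - Q x) - C x) \<le> e * norm x"
    by (intro bexI[of _ "\<lambda>x. C x + scaleC (-1) (D x)"]) simp_all
qed

lemma star_poly_alg_funpow: "B \<in> star_poly_alg T \<Longrightarrow> B ^^ n \<in> star_poly_alg T"
proof (induction n)
  case 0 then show ?case using star_poly_alg.unit by (simp add: id_def)
next
  case (Suc n) then show ?case using star_poly_alg.comp[OF Suc.prems Suc.IH] by (simp add: comp_def)
qed

text \<open>The orthogonal projection onto the kernel of an idempotent in the *-algebra
  generated by T is a norm limit of elements of that algebra: the damped operator
  x - (E* E x)/K^2 belongs to the algebra, and so do its powers.\<close>
lemma idempotent_kernel_projection: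
  fixes E :: "'a::chilbert \<Rightarrow> 'a"
  assumes E: "bounded_clinear E" "E \<in> star_poly_alg T" and idem: "\<And>x. E (E x) = E x"
  obtains P where "bounded_clinear P" "is_orth_proj P (ker E)" "approx_by (star_poly_alg T) P"
proof -
  obtain K where K: "K \<ge> 1" "\<And>x. norm (E x) \<le> norm x * K" using bcl_bound[OF E(1)] by blast
  interpret damped_idempotent E "cadjoint E" K
    using cadjoint_is_adjoint[OF E(1)] idem K by unfold_locales (auto intro: E(1))
  obtain P where P: "bounded_clinear P" "is_orth_proj P (ker E)"
    and conv: "\<forall>e>0. \<exists>n. \<forall>x. norm (P x - (damp ^^ n) x) \<le> e * norm x"
    using kernel_projection by blast
  have "(\<lambda>x. (\<lambda>x. x) x + scaleC (- of_real (1 / K^2)) ((cadjoint E \<circ> E) x)) \<in> star_poly_alg T"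
    by (intro star_poly_alg.add star_poly_alg.unit star_poly_alg.smult star_poly_alg.comp
        star_poly_alg.adj E(2))
  then have "damp \<in> star_poly_alg T"
    by (simp add: damp_def[abs_def] scaleC_minus_left)
  then have "approx_by (star_poly_alg T) P"
    unfolding approx_by_def using conv star_poly_alg_funpow by blast
  then show ?thesis using that P by blast
qed

lemma ker_opprod_projection:
  fixes T :: "'a::chilbert \<Rightarrow> 'a"
  assumes T: "bounded_clinear T" and inj: "inj_on t {1..N}"
    and annihilates: "opprod T t k N = (\<lambda>x. 0)" and mN: "m \<le> N"
  obtains P where "bounded_clinear P" "is_orth_proj P (ker (opprod T t k m))"
    "approx_by (star_poly_alg T) P"
proof -
  define p where "p = (\<Prod>i\<in>{1..m}. [:-t i, 1:] ^ k i)"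
  define q where "q = (\<Prod>j\<in>{Suc m..N}. [:-t j, 1:] ^ k j)"
  have "{1..N} = {1..m} \<union> {Suc m..N}" using mN by auto
  then have "p * q = (\<Prod>i\<in>{1..N}. [:-t i, 1:] ^ k i)"
    unfolding p_def q_def by (simp add: prod.union_disjoint[symmetric] ivl_disj_int)
  then have "peval (p * q) T = (\<lambda>x. 0)" using annihilates by (simp add: opprod_peval[OF T])
  moreover have "coprime p q" unfolding p_def q_def using opprod_factors_coprime[OF inj mN] .
  ultimately obtain f where idem: "\<And>x. peval f T (peval f T x) = peval f T x"
    and ker_p: "ker (peval f T) = ker (peval p T)"
    using coprime_idempotent[OF T] by blast
  have ker_f: "ker (peval f T) = ker (opprod T t k m)"
    using ker_p unfolding p_def opprod_peval[OF T] .
  have "peval f T \<in> star_poly_alg T" by (rule peval_in_star_poly_alg[OF T star_poly_alg.gen])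
  then obtain P where "bounded_clinear P" "is_orth_proj P (ker (peval f T))"
    "approx_by (star_poly_alg T) P"
    using idempotent_kernel_projection[OF peval_bcl[OF T] _ idem] by blast
  then show ?thesis using that unfolding ker_f by blast
qed

section \<open>Projections onto the layers\<close>

lemma orth_proj_diff:
  assumes P1: "is_orth_proj P1 R1" and P0: "is_orth_proj P0 R0" and sub: "R0 \<subseteq> R1"
    and diff: "\<And>x y. x \<in> R1 \<Longrightarrow> y \<in> R1 \<Longrightarrow> x - y \<in> R1"
  shows "is_orth_proj (\<lambda>x. P1 x - P0 x) (orth_in R1 R0)"
  unfolding is_orth_proj_def
proof (intro allI conjI ballI)
  fix x
  have p1: "P1 x \<in> R1" and o1: "\<And>y. y \<in> R1 \<Longrightarrow> cinner y (x - P1 x) = 0"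
    using P1 unfolding is_orth_proj_def by auto
  have p0: "P0 x \<in> R0" and o0: "\<And>y. y \<in> R0 \<Longrightarrow> cinner y (x - P0 x) = 0"
    using P0 unfolding is_orth_proj_def by auto
  have "cinner y (P1 x - P0 x) = 0" if "y \<in> R0" for y
    using o1[of y] o0[of y] sub that by (auto simp: cinner_diff_right)
  then show "P1 x - P0 x \<in> orth_in R1 R0"
    unfolding orth_in_def using diff[OF p1] p0 sub by blast
  fix y assume "y \<in> orth_in R1 R0"
  then have "y \<in> R1" "cinner (P0 x) y = 0" using p0 unfolding orth_in_def by auto
  then have "cinner y (x - P1 x) = 0" "cinner y (P0 x) = 0" using o1 cinner_orth_sym by auto
  then show "cinner y (x - (P1 x - P0 x)) = 0"
    by (metis add_0 cinner_add_right diff_diff_eq2 diff_add_cancel)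
qed

theorem mainTheorem5:
  fixes T :: "'a::chilbert \<Rightarrow> 'a"
    and t :: "nat \<Rightarrow> complex"
    and k :: "nat \<Rightarrow> nat"
    and N :: nat
  assumes "bounded_clinear T"
    and "inj_on t {1..N}"
    and "\<forall>i\<in>{1..N}. k i > 0"
    and "opprod T t k N = (\<lambda>x. 0)"
  shows "\<forall>m\<in>{1..N}. \<exists>P\<in>cstar_gen T.
           is_orth_proj P (orth_in (ker (opprod T t k m)) (ker (opprod T t k (m - 1))))"
proof
  fix m assume m: "m \<in> {1..N}"
  have "m \<le> N" "m - 1 \<le> N" using m by auto
  obtain P1 where P1: "bounded_clinear P1" "is_orth_proj P1 (ker (opprod T t k m))"
    "approx_by (star_poly_alg T) P1"
    using ker_opprod_projection[OF assms(1,2,4) \<open>m \<le> N\<close>] by blast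
  obtain P0 where P0: "bounded_clinear P0" "is_orth_proj P0 (ker (opprod T t k (m - 1)))"
    "approx_by (star_poly_alg T) P0"
    using ker_opprod_projection[OF assms(1,2,4) \<open>m - 1 \<le> N\<close>] by blast
  have "Suc (m - 1) = m" using m by simp
  then have "ker (opprod T t k (m - 1)) \<subseteq> ker (opprod T t k m)"
    using ker_opprod_mono[OF assms(1), of t k "m - 1"] by metis
  then have "is_orth_proj (\<lambda>x. P1 x - P0 x)
      (orth_in (ker (opprod T t k m)) (ker (opprod T t k (m - 1))))"
    using orth_proj_diff[OF P1(2) P0(2)] ker_diff[OF opprod_bcl[OF assms(1)]] by blast
  moreover have "(\<lambda>x. P1 x - P0 x) \<in> cstar_gen T"
    by (intro cstar_genI bcl_minus_fun approx_by_diff P1 P0)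
  ultimately show "\<exists>P\<in>cstar_gen T.
      is_orth_proj P (orth_in (ker (opprod T t k m)) (ker (opprod T t k (m - 1))))" by blast
qed

end
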